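(* Let $S\subseteq\mathbb{S}$ be nonempty. Then there exists a closed s-convex set $C\subseteq\mathbb{S}$ with $S\subseteq C$ if and only if there exist $u\in\mathbb{R}^n$ with $\|u\|=1$ and $\alpha>0$ such that $S\subseteq\mathbb{S}\cap\{x\in\mathbb{R}^n\mid\langle x,u\rangle\ge\alpha\}$.
   Context: Standing setting: $n\ge 2$; $\mathbb{R}^n$ carries the usual inner product $\langle\cdot,\cdot\rangle$ and Euclidean norm $\|\cdot\|$; $o$ denotes the zero vector. $\Phi:\mathbb{R}^n\to\mathbb{R}_+:=[0,\infty)$ is a continuous function with $\Phi(tx)=t\Phi(x)$ for all $x\in\mathbb{R}^n$, $t\ge 0$, and $\Phi(x)=0$ iff $x=o$. Set $\mathbb{S}:=\{x\in\mathbb{R}^n\mid \Phi(x)=1\}$ (with the topology induced from $\mathbb{R}^n$), and $\rho:\mathbb{R}^n\to\{o\}\cup\mathbb{S}$, $\rho(x):=x/\Phi(x)$ for $x\neq o$, $\rho(o):=o$. For $x,y\in\mathbb{S}$, $\lambda\in[0,1]$, $\lambda x+_s(1-\lambda)y:=\rho(\lambda x+(1-\lambda)y)$. A nonempty set $S\subseteq\mathbb{S}$ is called s-convex if $\lambda x+_s(1-\lambda)y\in S$ for all $x,y\in S$ and $\lambda\in[0,1]$. *)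

theory Defs
  imports "HOL-Analysis.Analysis"
begin

definition gauge_fun :: "('a::euclidean_space \<Rightarrow> real) \<Rightarrow> bool" where
  "gauge_fun Phi \<longleftrightarrow> continuous_on UNIV Phi \<and> (\<forall>x. Phi x \<ge> 0)
     \<and> (\<forall>x. \<forall>t::real. t \<ge> 0 \<longrightarrow> Phi (t *\<^sub>R x) = t * Phi x)
     \<and> (\<forall>x. Phi x = 0 \<longleftrightarrow> x = 0)"

definition sphS :: "('a::euclidean_space \<Rightarrow> real) \<Rightarrow> 'a set" where
  "sphS Phi = {x. Phi x = 1}"

definition rho :: "('a::euclidean_space \<Rightarrow> real) \<Rightarrow> 'a \<Rightarrow> 'a" where
  "rho Phi x = (if x = 0 then 0 else x /\<^sub>R Phi x)"

definition s_comb :: "('a::euclidean_space \<Rightarrow> real) \<Rightarrow> real \<Rightarrow> 'a \<Rightarrow> 'a \<Rightarrow> 'a" where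
  "s_comb Phi lam x y = rho Phi (lam *\<^sub>R x + (1 - lam) *\<^sub>R y)"

definition s_convex :: "('a::euclidean_space \<Rightarrow> real) \<Rightarrow> 'a set \<Rightarrow> bool" where
  "s_convex Phi S \<longleftrightarrow> S \<noteq> {} \<and> S \<subseteq> sphS Phi \<and>
     (\<forall>x\<in>S. \<forall>y\<in>S. \<forall>lam\<in>{0..1}. s_comb Phi lam x y \<in> S)"

end

theory Submission
  imports Defs
begin

text \<open>The rays through an s-convex set \<open>C\<close> form a convex cone missing the origin, because
  the ray through any point of a segment between two such rays passes through an s-combination
  of points of \<open>C\<close>. If \<open>C\<close> is closed it is compact, hence so is its convex hull, which lies in
  that cone; separating the hull from the origin gives \<open>u\<close> and \<open>\<alpha>\<close>. Conversely, since \<open>\<Phi>\<close> is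
  bounded below by a multiple of the norm, a set in the cap \<open>\<langle>x, u\<rangle> \<ge> \<alpha>\<close> of the sphere lies in
  the trace on the sphere of a closed circular cone \<open>c \<parallel>x\<parallel> \<le> \<langle>x, u\<rangle>\<close>, and the trace of a
  convex cone missing the origin is s-convex.\<close>

lemma gauge_fun_scaleR: "gauge_fun Phi \<Longrightarrow> t \<ge> 0 \<Longrightarrow> Phi (t *\<^sub>R x) = t * Phi x"
  unfolding gauge_fun_def by blast

lemma gauge_fun_eq_0_iff: "gauge_fun Phi \<Longrightarrow> Phi x = 0 \<longleftrightarrow> x = 0"
  unfolding gauge_fun_def by blast

lemma gauge_fun_pos: "gauge_fun Phi \<Longrightarrow> x \<noteq> 0 \<Longrightarrow> Phi x > 0"
  unfolding gauge_fun_def by (metis order_le_less)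

lemma gauge_fun_continuous_on: "gauge_fun Phi \<Longrightarrow> continuous_on A Phi"
  unfolding gauge_fun_def using continuous_on_subset by blast

lemma zero_notin_sphS: "gauge_fun Phi \<Longrightarrow> 0 \<notin> sphS Phi"
  using gauge_fun_eq_0_iff[of Phi 0] by (simp add: sphS_def)

lemma gauge_fun_norm_bound:
  fixes Phi :: "'a::euclidean_space \<Rightarrow> real"
  assumes g: "gauge_fun Phi"
  obtains m where "m > 0" "\<And>x. m * norm x \<le> Phi x"
proof -
  obtain b :: 'a where "b \<in> Basis" using nonempty_Basis by blast
  then have "sphere (0::'a) 1 \<noteq> {}" by (auto intro!: exI[of _ b])
  then obtain x0 where x0: "x0 \<in> sphere 0 1" "\<And>y. y \<in> sphere 0 1 \<Longrightarrow> Phi x0 \<le> Phi y"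
    using continuous_attains_inf[OF compact_sphere _ gauge_fun_continuous_on[OF g]] by blast
  have "Phi x0 * norm x \<le> Phi x" for x
  proof (cases "x = 0")
    case False
    then have "Phi x0 \<le> Phi ((1 / norm x) *\<^sub>R x)" by (intro x0(2)) simp
    also have "\<dots> = Phi x / norm x" using gauge_fun_scaleR[OF g, of "1 / norm x" x] by simp
    finally show ?thesis using False by (simp add: field_simps)
  qed (use gauge_fun_eq_0_iff[OF g, of 0] in simp)
  moreover have "x0 \<noteq> 0" using x0(1) by auto
  then have "Phi x0 > 0" by (rule gauge_fun_pos[OF g])
  ultimately show thesis using that by blast
qed

lemma compact_sphS:
  fixes Phi :: "'a::euclidean_space \<Rightarrow> real"
  assumes g: "gauge_fun Phi"
  shows "compact (sphS Phi)"
proof -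
  obtain m where m: "m > 0" "\<And>x. m * norm x \<le> Phi x" using gauge_fun_norm_bound[OF g] by blast
  have "closed (sphS Phi)" unfolding sphS_def
    by (intro closed_Collect_eq gauge_fun_continuous_on[OF g] continuous_on_const)
  moreover have "sphS Phi \<subseteq> cball 0 (1 / m)"
    using m by (auto simp: sphS_def field_simps) (metis m(2))
  ultimately show ?thesis using bounded_cball bounded_subset compact_eq_bounded_closed by blast
qed

lemma rho_eq_scaleR: "x \<noteq> 0 \<Longrightarrow> rho Phi x = (1 / Phi x) *\<^sub>R x"
  by (simp add: rho_def divide_inverse_commute)

lemma rho_in_sphS: "gauge_fun Phi \<Longrightarrow> x \<noteq> 0 \<Longrightarrow> rho Phi x \<in> sphS Phi"
  using gauge_fun_scaleR[of Phi "1 / Phi x" x] gauge_fun_pos[of Phi x]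
  by (simp add: rho_eq_scaleR sphS_def)

lemma rho_in_sphS_imp_nonzero: "gauge_fun Phi \<Longrightarrow> rho Phi x \<in> sphS Phi \<Longrightarrow> x \<noteq> 0"
  using zero_notin_sphS by (fastforce simp: rho_def)

definition ray_cone :: "'a::real_vector set \<Rightarrow> 'a set" where
  "ray_cone C = {t *\<^sub>R x | t x. t > 0 \<and> x \<in> C}"

lemma subset_ray_cone: "C \<subseteq> ray_cone C"
  unfolding ray_cone_def by (auto intro!: exI[of _ 1])

lemma zero_notin_ray_cone: "0 \<notin> C \<Longrightarrow> 0 \<notin> ray_cone C"
  unfolding ray_cone_def by auto

lemma convex_ray_cone_if_s_convex:
  fixes C :: "'a::euclidean_space set"
  assumes g: "gauge_fun Phi" and C: "s_convex Phi C"
  shows "convex (ray_cone C)"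
proof (rule convexI)
  fix a b and mu nu :: real
  assume a: "a \<in> ray_cone C" and b: "b \<in> ray_cone C" and "0 \<le> mu" "0 \<le> nu" "mu + nu = 1"
  obtain t x where tx: "t > 0" "x \<in> C" "a = t *\<^sub>R x" using a by (auto simp: ray_cone_def)
  obtain s y where sy: "s > 0" "y \<in> C" "b = s *\<^sub>R y" using b by (auto simp: ray_cone_def)
  show "mu *\<^sub>R a + nu *\<^sub>R b \<in> ray_cone C"
  proof (cases "mu = 0 \<or> nu = 0")
    case True
    then show ?thesis using a b \<open>mu + nu = 1\<close> by auto
  next
    case False
    define p q where "p = mu * t" and "q = nu * s"
    have pq: "p > 0" "q > 0"
      using False \<open>0 \<le> mu\<close> \<open>0 \<le> nu\<close> tx sy by (auto simp: p_def q_def)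
    define lam where "lam = p / (p + q)"
    define z where "z = lam *\<^sub>R x + (1 - lam) *\<^sub>R y"
    have "lam \<in> {0..1}" using pq by (auto simp: lam_def)
    then have rz: "rho Phi z \<in> C"
      using C tx(2) sy(2) by (auto simp: s_convex_def s_comb_def z_def)
    then have "z \<noteq> 0"
      using C rho_in_sphS_imp_nonzero[OF g] by (auto simp: s_convex_def)
    then have Phi_z: "Phi z > 0" using gauge_fun_pos[OF g] by blast
    then have z: "z = Phi z *\<^sub>R rho Phi z" using \<open>z \<noteq> 0\<close> by (simp add: rho_eq_scaleR)
    have "mu *\<^sub>R a + nu *\<^sub>R b = p *\<^sub>R x + q *\<^sub>R y"
      by (simp add: tx(3) sy(3) p_def q_def)
    also have "\<dots> = (p + q) *\<^sub>R z"
    proof -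
      have "(p + q) * lam = p" "(p + q) * (1 - lam) = q"
        using pq by (simp_all add: lam_def field_simps)
      then show ?thesis by (simp add: z_def scaleR_add_right)
    qed
    also have "\<dots> = ((p + q) * Phi z) *\<^sub>R rho Phi z"
      by (subst z) simp
    finally show ?thesis
      using pq Phi_z rz unfolding ray_cone_def by (auto intro!: exI[of _ "(p + q) * Phi z"])
  qed
qed

lemma zero_notin_convex_hull_if_s_convex:
  fixes C :: "'a::euclidean_space set"
  assumes "gauge_fun Phi" and "s_convex Phi C"
  shows "0 \<notin> convex hull C"
proof -
  have "0 \<notin> ray_cone C"
    using assms zero_notin_sphS by (intro zero_notin_ray_cone) (auto simp: s_convex_def)
  moreover have "convex hull C \<subseteq> ray_cone C"
    by (rule hull_minimal[where S=convex, OF subset_ray_cone convex_ray_cone_if_s_convex[OF assms]])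
  ultimately show ?thesis by blast
qed

lemma compact_halfspace_separation:
  fixes C :: "'a::euclidean_space set"
  assumes "compact C" and "0 \<notin> convex hull C"
  obtains u \<alpha> where "norm u = 1" "\<alpha> > 0" "\<And>x. x \<in> C \<Longrightarrow> x \<bullet> u \<ge> \<alpha>"
proof -
  obtain a b where ab: "a \<noteq> 0" "0 < b" "\<And>x. x \<in> convex hull C \<Longrightarrow> a \<bullet> x > b"
    using separating_hyperplane_closed_0[OF convex_convex_hull
        compact_imp_closed[OF compact_convex_hull[OF assms(1)]] assms(2)] by blast
  have "x \<bullet> ((1 / norm a) *\<^sub>R a) \<ge> b / norm a" if "x \<in> C" for x
    using ab(3)[OF hull_inc[OF that]] ab(1)
    by (simp add: inner_commute divide_right_mono less_imp_le)
  then show thesis using that[of "(1 / norm a) *\<^sub>R a" "b / norm a"] ab(1,2) by simp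
qed

lemma s_comb_in_cone:
  fixes K :: "'a::euclidean_space set"
  assumes g: "gauge_fun Phi" and K: "convex K" "0 \<notin> K" "\<And>t x. t > 0 \<Longrightarrow> x \<in> K \<Longrightarrow> t *\<^sub>R x \<in> K"
    and xy: "x \<in> sphS Phi \<inter> K" "y \<in> sphS Phi \<inter> K" and lam: "lam \<in> {0..1}"
  shows "s_comb Phi lam x y \<in> sphS Phi \<inter> K"
proof -
  define z where "z = lam *\<^sub>R x + (1 - lam) *\<^sub>R y"
  have "z \<in> K" using K(1) xy lam by (auto simp: z_def intro: convexD)
  then have "z \<noteq> 0" using K(2) by blast
  then show ?thesis
    using \<open>z \<in> K\<close> K(3)[of "1 / Phi z" z] gauge_fun_pos[OF g] rho_in_sphS[OF g]
    by (simp add: s_comb_def z_def[symmetric] rho_eq_scaleR)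
qed

lemma convex_circular_cone:
  fixes u :: "'a::real_inner"
  assumes "c \<ge> 0"
  shows "convex {x. c * norm x \<le> x \<bullet> u}"
proof (rule convexI)
  fix x y and mu nu :: real
  assume "x \<in> {x. c * norm x \<le> x \<bullet> u}" "y \<in> {x. c * norm x \<le> x \<bullet> u}"
    and "0 \<le> mu" "0 \<le> nu" "mu + nu = 1"
  then have "c * norm (mu *\<^sub>R x + nu *\<^sub>R y) \<le> mu * (c * norm x) + nu * (c * norm y)"
    using mult_left_mono[OF norm_triangle_ineq[of "mu *\<^sub>R x" "nu *\<^sub>R y"] assms]
    by (simp add: algebra_simps)
  also have "\<dots> \<le> mu * (x \<bullet> u) + nu * (y \<bullet> u)"
    using \<open>0 \<le> mu\<close> \<open>0 \<le> nu\<close> \<open>x \<in> _\<close> \<open>y \<in> _\<close> by (auto intro!: add_mono mult_left_mono)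
  finally show "mu *\<^sub>R x + nu *\<^sub>R y \<in> {x. c * norm x \<le> x \<bullet> u}"
    by (simp add: inner_add_left)
qed

lemma s_convex_sphS_circular_cone:
  fixes u :: "'a::euclidean_space"
  assumes g: "gauge_fun Phi" and "c > 0" and "sphS Phi \<inter> {x. c * norm x \<le> x \<bullet> u} \<noteq> {}"
  shows "s_convex Phi (sphS Phi \<inter> {x. c * norm x \<le> x \<bullet> u})"
proof -
  define K where "K = {x. c * norm x \<le> x \<bullet> u} \<inter> {x. u \<bullet> x > 0}"
  have "convex K"
    unfolding K_def using \<open>c > 0\<close> by (intro convex_Int convex_circular_cone convex_halfspace_gt) simp
  moreover have "0 \<notin> K" by (simp add: K_def)
  moreover have "t *\<^sub>R x \<in> K" if "t > 0" "x \<in> K" for t x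
    using that by (auto simp: K_def)
  ultimately have "s_comb Phi lam x y \<in> sphS Phi \<inter> K"
    if "x \<in> sphS Phi \<inter> K" "y \<in> sphS Phi \<inter> K" "lam \<in> {0..1}" for x y lam
    using s_comb_in_cone[OF g] that by blast
  moreover have "sphS Phi \<inter> {x. c * norm x \<le> x \<bullet> u} = sphS Phi \<inter> K"
  proof -
    have "c * norm x > 0" if "x \<in> sphS Phi" for x
      using that zero_notin_sphS[OF g] \<open>c > 0\<close> by (metis mult_pos_pos zero_less_norm_iff)
    then show ?thesis unfolding K_def by (force simp: inner_commute)
  qed
  ultimately show ?thesis
    using assms(3) unfolding s_convex_def by auto
qed

theorem mainTheorem7:
  fixes Phi :: "'a::euclidean_space \<Rightarrow> real" and S :: "'a set"
  assumes "DIM('a) \<ge> 2"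
    and "gauge_fun Phi"
    and "S \<noteq> {}" and "S \<subseteq> sphS Phi"
  shows "(\<exists>C. s_convex Phi C \<and> closedin (top_of_set (sphS Phi)) C \<and> S \<subseteq> C)
     \<longleftrightarrow> (\<exists>u \<alpha>. norm u = 1 \<and> \<alpha> > 0 \<and> S \<subseteq> sphS Phi \<inter> {x. x \<bullet> u \<ge> \<alpha>})"
proof
  assume "\<exists>C. s_convex Phi C \<and> closedin (top_of_set (sphS Phi)) C \<and> S \<subseteq> C"
  then obtain C where C: "s_convex Phi C" "closedin (top_of_set (sphS Phi)) C" "S \<subseteq> C" by blast
  have "compact C"
    using C(2) compact_sphS[OF assms(2)] closedin_compact by blast
  then obtain u \<alpha> where "norm u = 1" "\<alpha> > 0" "\<And>x. x \<in> C \<Longrightarrow> x \<bullet> u \<ge> \<alpha>"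
    using compact_halfspace_separation zero_notin_convex_hull_if_s_convex[OF assms(2) C(1)] by blast
  then show "\<exists>u \<alpha>. norm u = 1 \<and> \<alpha> > 0 \<and> S \<subseteq> sphS Phi \<inter> {x. x \<bullet> u \<ge> \<alpha>}"
    using C(3) assms(4) by blast
next
  assume "\<exists>u \<alpha>. norm u = 1 \<and> \<alpha> > 0 \<and> S \<subseteq> sphS Phi \<inter> {x. x \<bullet> u \<ge> \<alpha>}"
  then obtain u \<alpha> where "\<alpha> > 0" and S: "S \<subseteq> sphS Phi \<inter> {x. x \<bullet> u \<ge> \<alpha>}" by blast
  obtain m where m: "m > 0" "\<And>x. m * norm x \<le> Phi x" using gauge_fun_norm_bound[OF assms(2)] by blast
  define C where "C = sphS Phi \<inter> {x. \<alpha> * m * norm x \<le> x \<bullet> u}"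
  have "\<alpha> * m * norm x \<le> x \<bullet> u" if "x \<in> S" for x
  proof -
    have "Phi x = 1" "\<alpha> \<le> x \<bullet> u" using S that by (auto simp: sphS_def)
    then have "\<alpha> * (m * norm x) \<le> \<alpha>"
      using mult_left_mono[of "m * norm x" 1 \<alpha>] m(2)[of x] \<open>\<alpha> > 0\<close> by simp
    then show ?thesis using \<open>\<alpha> \<le> x \<bullet> u\<close> by (simp add: mult.assoc)
  qed
  then have "S \<subseteq> C" using S by (auto simp: C_def)
  moreover have "closedin (top_of_set (sphS Phi)) C"
    unfolding C_def by (intro closedin_closed_Int closed_Collect_le continuous_intros)
  moreover have "C \<noteq> {}" using \<open>S \<subseteq> C\<close> assms(3) by blast
  then have "s_convex Phi C"
    unfolding C_def by (rule s_convex_sphS_circular_cone[OF assms(2) mult_pos_pos[OF \<open>\<alpha> > 0\<close> m(1)]])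
  ultimately show "\<exists>C. s_convex Phi C \<and> closedin (top_of_set (sphS Phi)) C \<and> S \<subseteq> C" by blast
qed

end
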